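(* Let $(X,\nu)$ be a measure space, $0<p<p_1<\infty$ and $0<q<\infty$. Let $f\in L_{p,q}$ and let $(g_j)$ be a sequence in $L_{p,q}$ such that $\limsup_{j\to\infty}\|g_j\|_{L_{p,q}}\leqslant A$ and $\lim_{j\to\infty}\|g_j\|_{L_{p_1}}=0$. Then $\limsup_{j\to\infty}\|f+g_j\|^q_{L_{p,q}}\leqslant\|f\|^q_{L_{p,q}}+A^q$.
   Context: $\|f\|^q_{L_{p,q}}=q\int_0^\infty(m_f(t)t^p)^{q/p}\frac{dt}{t}$ with $m_f(t)=\nu(\{x:|f(x)|\geqslant t\})$. *)

theory Defs
  imports "HOL-Analysis.Analysis"
begin

text \<open>Real power of an extended nonnegative real, for exponents a > 0:
  infinity to a positive power is infinity.\<close>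
definition epowr :: "ennreal \<Rightarrow> real \<Rightarrow> ennreal" where
  "epowr x a = (if x = \<infinity> then \<infinity> else ennreal (enn2real x powr a))"

definition distfun :: "'a measure \<Rightarrow> ('a \<Rightarrow> real) \<Rightarrow> real \<Rightarrow> ennreal" where
  "distfun M f t = emeasure M {x \<in> space M. t \<le> \<bar>f x\<bar>}"

definition lorentz_pow :: "'a measure \<Rightarrow> real \<Rightarrow> real \<Rightarrow> ('a \<Rightarrow> real) \<Rightarrow> ennreal" where
  "lorentz_pow M p q f =
     ennreal q * (\<integral>\<^sup>+ t \<in> {0<..}. epowr (distfun M f t * ennreal (t powr p)) (q / p) * ennreal (1 / t) \<partial>lborel)"

definition lorentz_norm :: "'a measure \<Rightarrow> real \<Rightarrow> real \<Rightarrow> ('a \<Rightarrow> real) \<Rightarrow> ennreal" where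
  "lorentz_norm M p q f = epowr (lorentz_pow M p q f) (1 / q)"

definition in_Lorentz :: "'a measure \<Rightarrow> real \<Rightarrow> real \<Rightarrow> ('a \<Rightarrow> real) \<Rightarrow> bool" where
  "in_Lorentz M p q f \<longleftrightarrow> f \<in> borel_measurable M \<and> lorentz_pow M p q f < \<infinity>"

definition lp_norm :: "'a measure \<Rightarrow> real \<Rightarrow> ('a \<Rightarrow> real) \<Rightarrow> ennreal" where
  "lp_norm M p g = epowr (\<integral>\<^sup>+ x. ennreal (\<bar>g x\<bar> powr p) \<partial>M) (1 / p)"

end

theory Submission
  imports Defs
begin

(* At levels t with e t >= u split m_{f+g}(t) <= m_f((1-e)t) + m_g(e t), and at levels e t < u the
   same with f and g exchanged; then (a + b)^r <= (1+e)^r a^r + (1+1/e)^r b^r with r = q/p. Since dt/t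
   is dilation invariant, the main terms give (1+e)^(q/p) (1-e)^(-q) (||f||^q + ||g_j||^q). One error
   term is the part of ||f||^q coming from levels below u, small for small u as f is in L_{p,q}. By
   Chebyshev's inequality m_g(s) <= s^(-p1) ||g||_{p1}^{p1}, the other is a multiple of
   ||g_j||_{p1}^{p1 q/p} times the integral of t^((p-p1) q/p) dt/t over [u, oo), which is finite as
   p < p1; so it vanishes as j -> oo. Let j -> oo, then u -> 0, then e -> 0. *)

lemma epowr_ennreal [simp]: "0 \<le> x \<Longrightarrow> epowr (ennreal x) a = ennreal (x powr a)"
  by (simp add: epowr_def)

lemma epowr_zero [simp]: "epowr 0 a = 0"
  by (simp add: epowr_def)

lemma epowr_top [simp]: "epowr top a = top"
  by (simp add: epowr_def)

lemma epowr_one [simp]: "epowr x 1 = x"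
  by (cases x) (auto simp: epowr_def)

lemma epowr_epowr: "0 < a \<Longrightarrow> 0 < b \<Longrightarrow> epowr (epowr x a) b = epowr x (a * b)"
  by (auto simp: epowr_def powr_powr)

lemma epowr_eq_0_iff: "0 < a \<Longrightarrow> epowr x a = 0 \<longleftrightarrow> x = 0"
  by (cases x) (auto simp: epowr_def)

lemma epowr_mono:
  assumes "0 < a" "x \<le> y"
  shows "epowr x a \<le> epowr y a"
proof (cases "y = top")
  case False
  with assms(2) have "x \<noteq> top"
    using top.extremum_unique by fastforce
  with False assms show ?thesis
    by (auto simp: epowr_def less_top intro!: ennreal_leI powr_mono2 enn2real_mono)
qed simp

lemma epowr_mult:
  assumes "0 < a"
  shows "epowr (x * y) a = epowr x a * epowr y a"
proof (cases "x = top \<or> y = top")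
  case True
  with assms show ?thesis
    by (cases "x = 0"; cases "y = 0") (auto simp: ennreal_mult_top ennreal_top_mult epowr_eq_0_iff)
next
  case False
  with assms show ?thesis
    by (auto simp: epowr_def enn2real_mult powr_mult ennreal_mult ennreal_mult_eq_top_iff)
qed

lemma surj_epowr:
  assumes "0 < a"
  shows "surj (\<lambda>x. epowr x a)"
proof -
  have "y \<in> range (\<lambda>x. epowr x a)" for y
  proof (cases y)
    case (real b)
    with assms have "y = epowr (ennreal (b powr (1 / a))) a"
      by (simp add: powr_powr)
    then show ?thesis by blast
  next
    case top
    then show ?thesis
      by (metis epowr_top rangeI)
  qed
  then show ?thesis by blast
qed

lemma continuous_on_epowr: "0 < a \<Longrightarrow> continuous_on UNIV (\<lambda>x. epowr x a)"
  by (rule continuous_onI_mono) (simp_all add: surj_epowr epowr_mono)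

lemma tendsto_epowr:
  assumes "(u \<longlongrightarrow> l) F" "0 < a"
  shows "((\<lambda>x. epowr (u x) a) \<longlongrightarrow> epowr l a) F"
  using continuous_on_tendsto_compose [OF continuous_on_epowr [OF \<open>0 < a\<close>] assms(1)] by simp

lemma borel_measurable_epowr [measurable]: "(\<lambda>x. epowr x a) \<in> borel_measurable borel"
  unfolding epowr_def by measurable

lemma powr_add_le_split:
  fixes u v a e :: real
  assumes "0 \<le> u" "0 \<le> v" "0 < a" "0 < e"
  shows "(u + v) powr a \<le> (1 + e) powr a * u powr a + (1 + 1 / e) powr a * v powr a"
proof (cases "v \<le> e * u")
  case True
  with assms have "(u + v) powr a \<le> ((1 + e) * u) powr a"
    by (intro powr_mono2) (auto simp: algebra_simps)
  with assms show ?thesis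
    by (simp add: powr_mult add_increasing2)
next
  case False
  with assms have "u \<le> v / e"
    by (simp add: field_simps)
  with assms have "(u + v) powr a \<le> ((1 + 1 / e) * v) powr a"
    by (intro powr_mono2) (auto simp: algebra_simps)
  with assms show ?thesis
    by (simp add: powr_mult add_increasing)
qed

lemma epowr_add_le:
  assumes "0 < a" "0 < e"
  shows "epowr (x + y) a \<le> ennreal ((1 + e) powr a) * epowr x a + ennreal ((1 + 1 / e) powr a) * epowr y a"
proof (cases "x = top \<or> y = top")
  case True
  have "0 < 1 + 1 / e"
    using assms by (simp add: add_pos_pos)
  with assms have "0 < (1 + e) powr a" "0 < (1 + 1 / e) powr a"
    by simp_all
  with True show ?thesis
    by (auto simp: ennreal_mult_top)
next
  case False
  then obtain u v where uv: "x = ennreal u" "y = ennreal v" "0 \<le> u" "0 \<le> v"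
    by (cases x; cases y) auto
  then have "epowr (x + y) a = ennreal ((u + v) powr a)"
    by (simp flip: ennreal_plus)
  also have "\<dots> \<le> ennreal ((1 + e) powr a * u powr a + (1 + 1 / e) powr a * v powr a)"
    using powr_add_le_split [OF uv(3,4) assms] by (rule ennreal_leI)
  also have "\<dots> = ennreal ((1 + e) powr a) * epowr x a + ennreal ((1 + 1 / e) powr a) * epowr y a"
    using uv by (simp add: ennreal_mult ennreal_plus)
  finally show ?thesis .
qed

lemma borel_measurable_antimono_ennreal:
  fixes \<phi> :: "real \<Rightarrow> ennreal"
  assumes "\<And>s t. s \<le> t \<Longrightarrow> \<phi> t \<le> \<phi> s"
  shows "\<phi> \<in> borel_measurable borel"
proof (rule borel_measurableI_greater)
  fix y
  have "is_interval {x. y < \<phi> x}"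
    unfolding is_interval_1 using assms by (auto intro: less_le_trans)
  then show "{x \<in> space borel. y < \<phi> x} \<in> sets borel"
    by (simp add: real_interval_borel_measurable)
qed

lemma distfun_antimono:
  assumes [measurable]: "h \<in> borel_measurable M" and "s \<le> t"
  shows "distfun M h t \<le> distfun M h s"
  unfolding distfun_def using assms(2) by (intro emeasure_mono) auto

lemma borel_measurable_distfun [measurable]:
  "h \<in> borel_measurable M \<Longrightarrow> distfun M h \<in> borel_measurable borel"
  by (rule borel_measurable_antimono_ennreal) (rule distfun_antimono)

lemma distfun_add_le:
  assumes [measurable]: "f \<in> borel_measurable M" "g \<in> borel_measurable M"
  shows "distfun M (\<lambda>x. f x + g x) (s + t) \<le> distfun M f s + distfun M g t"
proof -
  have "distfun M (\<lambda>x. f x + g x) (s + t)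
      \<le> emeasure M ({x \<in> space M. s \<le> \<bar>f x\<bar>} \<union> {x \<in> space M. t \<le> \<bar>g x\<bar>})"
    unfolding distfun_def by (intro emeasure_mono) auto
  also have "\<dots> \<le> distfun M f s + distfun M g t"
    unfolding distfun_def by (intro emeasure_subadditive) auto
  finally show ?thesis .
qed

lemma distfun_le_moment:
  assumes [measurable]: "g \<in> borel_measurable M" and "0 < s" "0 < P"
  shows "distfun M g s \<le> ennreal (s powr - P) * (\<integral>\<^sup>+x. ennreal (\<bar>g x\<bar> powr P) \<partial>M)"
proof -
  have "ennreal (s powr P) * distfun M g s
      = (\<integral>\<^sup>+x. ennreal (s powr P) * indicator {x \<in> space M. s \<le> \<bar>g x\<bar>} x \<partial>M)"
    unfolding distfun_def by (subst nn_integral_cmult_indicator) auto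
  also have "\<dots> \<le> (\<integral>\<^sup>+x. ennreal (\<bar>g x\<bar> powr P) \<partial>M)"
    using assms by (intro nn_integral_mono) (auto simp: indicator_def intro!: ennreal_leI powr_mono2)
  finally have "ennreal (s powr - P) * (ennreal (s powr P) * distfun M g s)
      \<le> ennreal (s powr - P) * (\<integral>\<^sup>+x. ennreal (\<bar>g x\<bar> powr P) \<partial>M)"
    by (rule mult_left_mono) simp
  with assms show ?thesis
    by (simp add: mult.assoc [symmetric] powr_minus flip: ennreal_mult)
qed

definition multiplicative_haar :: "real measure" where
  "multiplicative_haar = density lborel (\<lambda>t. ennreal (1 / t) * indicator {0<..} t)"

lemma sets_multiplicative_haar [measurable_cong]: "sets multiplicative_haar = sets borel"
  by (simp add: multiplicative_haar_def)

lemma AE_multiplicative_haar_pos: "AE t in multiplicative_haar. 0 < t"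
  unfolding multiplicative_haar_def by (subst AE_density) (auto split: split_indicator)

lemma nn_integral_multiplicative_haar:
  assumes [measurable]: "\<phi> \<in> borel_measurable borel"
  shows "(\<integral>\<^sup>+t. \<phi> t \<partial>multiplicative_haar) = (\<integral>\<^sup>+t \<in> {0<..}. \<phi> t * ennreal (1 / t) \<partial>lborel)"
  unfolding multiplicative_haar_def by (subst nn_integral_density) (auto simp: mult_ac)

lemma nn_integral_multiplicative_haar_dilation:
  assumes [measurable]: "\<phi> \<in> borel_measurable borel" and "0 < c"
  shows "(\<integral>\<^sup>+t. \<phi> (c * t) \<partial>multiplicative_haar) = (\<integral>\<^sup>+t. \<phi> t \<partial>multiplicative_haar)"
proof -
  define H where "H t = \<phi> t * ennreal (1 / t) * indicator {0<..} t" for t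
  have [measurable]: "H \<in> borel_measurable borel"
    unfolding H_def by measurable
  have "H (c * t) = ennreal (1 / c) * (\<phi> (c * t) * ennreal (1 / t) * indicator {0<..} t)" for t
  proof (cases "0 < t")
    case True
    with \<open>0 < c\<close> have "ennreal (1 / (c * t)) = ennreal (1 / c) * ennreal (1 / t)"
      by (subst ennreal_mult [symmetric]) auto
    with True \<open>0 < c\<close> show ?thesis
      unfolding H_def by (simp add: mult_ac)
  qed (use \<open>0 < c\<close> in \<open>simp add: H_def zero_less_mult_iff\<close>)
  then have "(\<integral>\<^sup>+t. H t \<partial>lborel) = ennreal c * ennreal (1 / c) * (\<integral>\<^sup>+t. \<phi> (c * t) \<partial>multiplicative_haar)"
    using nn_integral_real_affine [of H c 0] \<open>0 < c\<close>
    by (simp add: nn_integral_multiplicative_haar nn_integral_cmult mult.assoc)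
  also have "ennreal c * ennreal (1 / c) = 1"
    using \<open>0 < c\<close> by (simp flip: ennreal_mult)
  finally show ?thesis
    by (simp add: H_def nn_integral_multiplicative_haar)
qed

lemma nn_integral_multiplicative_haar_tail_finite:
  assumes "e < 0" "0 < u"
  shows "(\<integral>\<^sup>+t \<in> {u..}. ennreal (t powr e) \<partial>multiplicative_haar) < top"
proof -
  define F where "F t = (if t \<in> {u..} then t powr (e - 1) else 0)" for t
  have [measurable]: "F \<in> borel_measurable borel"
    unfolding F_def by measurable
  have "((\<lambda>t. t powr (e - 1)) has_integral - (u powr e) / e) {u..}"
    using has_integral_powr_to_inf [of "e - 1" u] assms by simp
  then have "(F has_integral - (u powr e) / e) UNIV"
    using has_integral_restrict_UNIV [of "{u..}" "\<lambda>t. t powr (e - 1)"] by (simp only: F_def [abs_def])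
  then have "(\<integral>\<^sup>+t. ennreal (F t) \<partial>lborel) = ennreal (- (u powr e) / e)"
    by (rule nn_integral_has_integral_lborel [rotated 2]) (auto simp: F_def)
  moreover have "(\<integral>\<^sup>+t \<in> {u..}. ennreal (t powr e) \<partial>multiplicative_haar) = (\<integral>\<^sup>+t. ennreal (F t) \<partial>lborel)"
    using \<open>0 < u\<close>
    by (auto simp: nn_integral_multiplicative_haar F_def indicator_def powr_diff
             simp flip: ennreal_mult intro!: nn_integral_cong)
  ultimately show ?thesis
    by simp
qed

lemma INT_lessThan_inverse_Suc: "(\<Inter>n. {..<1 / real (Suc n)}) = {..0}"
proof (intro set_eqI iffI)
  fix x :: real
  assume x: "x \<in> (\<Inter>n. {..<1 / real (Suc n)})"
  show "x \<in> {..0}"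
  proof (rule ccontr)
    assume "x \<notin> {..0}"
    then obtain n where "inverse (real (Suc n)) < x"
      using reals_Archimedean [of x] by auto
    moreover from x have "x < 1 / real (Suc n)"
      by blast
    ultimately show False
      by (simp add: inverse_eq_divide)
  qed
qed (auto intro: le_less_trans)

lemma nn_integral_multiplicative_haar_below_tendsto_0:
  assumes [measurable]: "\<phi> \<in> borel_measurable borel"
    and fin: "(\<integral>\<^sup>+t. \<phi> t \<partial>multiplicative_haar) < top"
  shows "(\<lambda>n. \<integral>\<^sup>+t \<in> {..<1 / Suc n}. \<phi> t \<partial>multiplicative_haar) \<longlonglongrightarrow> 0"
proof -
  define N where "N = density multiplicative_haar \<phi>"
  have N: "emeasure N S = (\<integral>\<^sup>+t \<in> S. \<phi> t \<partial>multiplicative_haar)" if "S \<in> sets borel" for S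
    unfolding N_def using that by (simp add: emeasure_density)
  have "decseq (\<lambda>n. {..<1 / real (Suc n)})"
    by (auto simp: decseq_def intro: order.strict_trans2 frac_le)
  moreover have "emeasure N {..<1 / real (Suc n)} \<noteq> top" for n
  proof -
    have "emeasure N {..<1 / real (Suc n)} \<le> (\<integral>\<^sup>+t. \<phi> t \<partial>multiplicative_haar)"
      by (auto simp: N intro!: nn_integral_mono split: split_indicator)
    with fin show ?thesis
      by (auto simp: top_unique)
  qed
  ultimately have "(\<lambda>n. emeasure N {..<1 / real (Suc n)}) \<longlonglongrightarrow> emeasure N (\<Inter>n. {..<1 / real (Suc n)})"
    by (intro Lim_emeasure_decseq) (auto simp: N_def sets_multiplicative_haar)
  also have "(\<Inter>n. {..<1 / real (Suc n)}) = {..0}"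
    by (rule INT_lessThan_inverse_Suc)
  also have "emeasure N {..0} = 0"
  proof -
    have "AE t in multiplicative_haar. \<phi> t * indicator {..0} t = 0"
      using AE_multiplicative_haar_pos by eventually_elim auto
    then have "(\<integral>\<^sup>+t \<in> {..0}. \<phi> t \<partial>multiplicative_haar) = (\<integral>\<^sup>+t. 0 \<partial>multiplicative_haar)"
      by (rule nn_integral_cong_AE)
    then show ?thesis
      by (simp add: N)
  qed
  finally show ?thesis
    by (simp add: N)
qed

definition lorentz_density :: "'a measure \<Rightarrow> real \<Rightarrow> real \<Rightarrow> ('a \<Rightarrow> real) \<Rightarrow> real \<Rightarrow> ennreal" where
  "lorentz_density M p q h t = epowr (distfun M h t * ennreal (t powr p)) (q / p)"

definition lorentz_pow_below :: "'a measure \<Rightarrow> real \<Rightarrow> real \<Rightarrow> ('a \<Rightarrow> real) \<Rightarrow> real \<Rightarrow> ennreal" where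
  "lorentz_pow_below M p q h u =
     ennreal q * (\<integral>\<^sup>+t \<in> {..<u}. lorentz_density M p q h t \<partial>multiplicative_haar)"

lemma borel_measurable_lorentz_density [measurable]:
  assumes [measurable]: "h \<in> borel_measurable M"
  shows "lorentz_density M p q h \<in> borel_measurable borel"
  unfolding lorentz_density_def by measurable

lemma lorentz_pow_eq_nn_integral_multiplicative_haar:
  "h \<in> borel_measurable M \<Longrightarrow>
    lorentz_pow M p q h = ennreal q * (\<integral>\<^sup>+t. lorentz_density M p q h t \<partial>multiplicative_haar)"
  by (simp add: lorentz_pow_def lorentz_density_def nn_integral_multiplicative_haar)

lemma lorentz_pow_eq_epowr_lorentz_norm: "0 < q \<Longrightarrow> lorentz_pow M p q h = epowr (lorentz_norm M p q h) q"
  by (simp add: lorentz_norm_def epowr_epowr)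

lemma nn_integral_powr_eq_epowr_lp_norm:
  "0 < P \<Longrightarrow> (\<integral>\<^sup>+x. ennreal (\<bar>g x\<bar> powr P) \<partial>M) = epowr (lp_norm M P g) P"
  by (simp add: lp_norm_def epowr_epowr)

lemma lorentz_pow_below_tendsto_0:
  assumes [measurable]: "h \<in> borel_measurable M" and "0 < q" "lorentz_pow M p q h < top"
  shows "(\<lambda>n. lorentz_pow_below M p q h (1 / Suc n)) \<longlonglongrightarrow> 0"
proof -
  have "(\<integral>\<^sup>+t. lorentz_density M p q h t \<partial>multiplicative_haar) < top"
    using assms by (auto simp: lorentz_pow_eq_nn_integral_multiplicative_haar ennreal_mult_less_top)
  then have "(\<lambda>n. \<integral>\<^sup>+t \<in> {..<1 / Suc n}. lorentz_density M p q h t \<partial>multiplicative_haar) \<longlonglongrightarrow> 0"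
    by (intro nn_integral_multiplicative_haar_below_tendsto_0) measurable
  from ennreal_tendsto_cmult [OF _ this, of "ennreal q"] show ?thesis
    by (simp add: lorentz_pow_below_def)
qed

lemma epowr_distfun_dilation:
  assumes "0 < c" "0 < p" "0 < q" "0 \<le> t"
  shows "epowr (distfun M h (c * t) * ennreal (t powr p)) (q / p)
    = ennreal (c powr - q) * lorentz_density M p q h (c * t)"
proof -
  have "t powr p = c powr - p * (c * t) powr p"
    using assms by (simp add: powr_mult powr_minus)
  then have "distfun M h (c * t) * ennreal (t powr p)
      = ennreal (c powr - p) * (distfun M h (c * t) * ennreal ((c * t) powr p))"
    by (simp add: ennreal_mult mult_ac)
  with assms show ?thesis
    by (simp add: lorentz_density_def epowr_mult powr_powr)
qed

lemma lorentz_density_add_le: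
  assumes [measurable]: "f \<in> borel_measurable M" "g \<in> borel_measurable M"
    and "0 < p" "0 < q" "0 < l" "l < 1" "0 < e" "0 < t"
  shows "lorentz_density M p q (\<lambda>x. f x + g x) t
    \<le> ennreal ((1 + e) powr (q / p) * l powr - q) * lorentz_density M p q f (l * t)
      + ennreal ((1 + 1 / e) powr (q / p) * (1 - l) powr - q) * lorentz_density M p q g ((1 - l) * t)"
proof -
  let ?T = "ennreal (t powr p)"
  have "distfun M (\<lambda>x. f x + g x) t \<le> distfun M f (l * t) + distfun M g ((1 - l) * t)"
    using distfun_add_le [of f M g "l * t" "(1 - l) * t"] by (simp add: algebra_simps)
  then have "lorentz_density M p q (\<lambda>x. f x + g x) t
      \<le> epowr (distfun M f (l * t) * ?T + distfun M g ((1 - l) * t) * ?T) (q / p)"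
    unfolding lorentz_density_def using assms
    by (intro epowr_mono) (auto simp flip: distrib_right intro: mult_right_mono)
  also have "\<dots> \<le> ennreal ((1 + e) powr (q / p)) * epowr (distfun M f (l * t) * ?T) (q / p)
      + ennreal ((1 + 1 / e) powr (q / p)) * epowr (distfun M g ((1 - l) * t) * ?T) (q / p)"
    using assms by (intro epowr_add_le) auto
  also have "\<dots> = ennreal ((1 + e) powr (q / p) * l powr - q) * lorentz_density M p q f (l * t)
      + ennreal ((1 + 1 / e) powr (q / p) * (1 - l) powr - q) * lorentz_density M p q g ((1 - l) * t)"
    using assms by (simp add: epowr_distfun_dilation ennreal_mult mult.assoc)
  finally show ?thesis .
qed

lemma lorentz_density_le_moment:
  assumes [measurable]: "g \<in> borel_measurable M" and "0 < p" "0 < q" "0 < P" "0 < s"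
  shows "lorentz_density M p q g s
    \<le> ennreal (s powr ((p - P) * (q / p))) * epowr (\<integral>\<^sup>+x. ennreal (\<bar>g x\<bar> powr P) \<partial>M) (q / p)"
proof -
  let ?I = "\<integral>\<^sup>+x. ennreal (\<bar>g x\<bar> powr P) \<partial>M"
  have "distfun M g s * ennreal (s powr p) \<le> ennreal (s powr - P) * ?I * ennreal (s powr p)"
    using distfun_le_moment [of g M s P] assms by (intro mult_right_mono) auto
  also have "\<dots> = ennreal (s powr - P * s powr p) * ?I"
    by (simp add: ennreal_mult mult_ac)
  also have "s powr - P * s powr p = s powr (p - P)"
    by (simp add: powr_add [symmetric])
  finally have "lorentz_density M p q g s \<le> epowr (ennreal (s powr (p - P)) * ?I) (q / p)"
    unfolding lorentz_density_def using assms by (intro epowr_mono) auto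
  with assms show ?thesis
    by (simp add: epowr_mult powr_powr)
qed

lemma nn_integral_lorentz_density_tail_le_moment:
  assumes [measurable]: "g \<in> borel_measurable M" and "0 < p" "0 < q" "0 < P" "0 < u"
  shows "(\<integral>\<^sup>+t \<in> {u..}. lorentz_density M p q g t \<partial>multiplicative_haar)
    \<le> (\<integral>\<^sup>+t \<in> {u..}. ennreal (t powr ((p - P) * (q / p))) \<partial>multiplicative_haar)
      * epowr (\<integral>\<^sup>+x. ennreal (\<bar>g x\<bar> powr P) \<partial>M) (q / p)"
proof -
  let ?I = "epowr (\<integral>\<^sup>+x. ennreal (\<bar>g x\<bar> powr P) \<partial>M) (q / p)"
  have "(\<integral>\<^sup>+t \<in> {u..}. lorentz_density M p q g t \<partial>multiplicative_haar)
      \<le> (\<integral>\<^sup>+t \<in> {u..}. ennreal (t powr ((p - P) * (q / p))) * ?I \<partial>multiplicative_haar)"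
  proof (rule nn_integral_mono)
    fix t
    show "lorentz_density M p q g t * indicator {u..} t
        \<le> ennreal (t powr ((p - P) * (q / p))) * ?I * indicator {u..} t"
    proof (cases "u \<le> t")
      case True
      with assms have "lorentz_density M p q g t \<le> ennreal (t powr ((p - P) * (q / p))) * ?I"
        by (intro lorentz_density_le_moment) auto
      with True show ?thesis
        by simp
    qed simp
  qed
  also have "\<dots> = (\<integral>\<^sup>+t \<in> {u..}. ennreal (t powr ((p - P) * (q / p))) \<partial>multiplicative_haar) * ?I"
    by (subst nn_integral_multc [symmetric]) (simp_all add: mult_ac)
  finally show ?thesis .
qed

lemma lorentz_density_add_split_le:
  assumes [measurable]: "f \<in> borel_measurable M" "g \<in> borel_measurable M"
    and "0 < p" "0 < q" "0 < e" "e < 1" "0 < t"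
  shows "lorentz_density M p q (\<lambda>x. f x + g x) t
    \<le> ennreal ((1 + e) powr (q / p) * (1 - e) powr - q)
        * (lorentz_density M p q f ((1 - e) * t) + lorentz_density M p q g ((1 - e) * t))
      + ennreal ((1 + 1 / e) powr (q / p) * e powr - q)
        * (indicator {..<u} (e * t) * lorentz_density M p q f (e * t)
           + indicator {u..} (e * t) * lorentz_density M p q g (e * t))"
    (is "_ \<le> ?C1 * (?Ff + ?Fg) + ?C2 * (?Ef + ?Eg)")
proof (cases "e * t < u")
  case True
  have "lorentz_density M p q (\<lambda>x. g x + f x) t \<le> ?C1 * ?Fg + ?C2 * lorentz_density M p q f (e * t)"
    using lorentz_density_add_le [of g M f p q "1 - e" e t] assms by simp
  also have "\<dots> \<le> ?C1 * (?Ff + ?Fg) + ?C2 * (?Ef + ?Eg)"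
    using True by (intro add_mono mult_left_mono) auto
  finally show ?thesis
    by (simp add: add.commute)
next
  case False
  have "lorentz_density M p q (\<lambda>x. f x + g x) t \<le> ?C1 * ?Ff + ?C2 * lorentz_density M p q g (e * t)"
    using lorentz_density_add_le [of f M g p q "1 - e" e t] assms by simp
  also have "\<dots> \<le> ?C1 * (?Ff + ?Fg) + ?C2 * (?Ef + ?Eg)"
    using False by (intro add_mono mult_left_mono) auto
  finally show ?thesis .
qed

lemma nn_integral_lorentz_density_add_le:
  assumes [measurable]: "f \<in> borel_measurable M" "g \<in> borel_measurable M"
    and "0 < p" "0 < q" "0 < e" "e < 1"
  shows "(\<integral>\<^sup>+t. lorentz_density M p q (\<lambda>x. f x + g x) t \<partial>multiplicative_haar)
    \<le> ennreal ((1 + e) powr (q / p) * (1 - e) powr - q)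
        * ((\<integral>\<^sup>+t. lorentz_density M p q f t \<partial>multiplicative_haar)
           + (\<integral>\<^sup>+t. lorentz_density M p q g t \<partial>multiplicative_haar))
      + ennreal ((1 + 1 / e) powr (q / p) * e powr - q)
        * ((\<integral>\<^sup>+t \<in> {..<u}. lorentz_density M p q f t \<partial>multiplicative_haar)
           + (\<integral>\<^sup>+t \<in> {u..}. lorentz_density M p q g t \<partial>multiplicative_haar))"
proof -
  define C1 where "C1 = ennreal ((1 + e) powr (q / p) * (1 - e) powr - q)"
  define C2 where "C2 = ennreal ((1 + 1 / e) powr (q / p) * e powr - q)"
  define D where "D h = lorentz_density M p q h" for h
  define E where "E s = indicator {..<u} s * D f s + indicator {u..} s * D g s" for s
  have [measurable]: "D f \<in> borel_measurable borel" "D g \<in> borel_measurable borel"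
    "E \<in> borel_measurable borel"
    unfolding D_def E_def by measurable
  have "(\<integral>\<^sup>+t. D (\<lambda>x. f x + g x) t \<partial>multiplicative_haar)
      \<le> (\<integral>\<^sup>+t. C1 * (D f ((1 - e) * t) + D g ((1 - e) * t)) + C2 * E (e * t) \<partial>multiplicative_haar)"
    using AE_multiplicative_haar_pos
    by (intro nn_integral_mono_AE, eventually_elim)
       (use assms in \<open>simp add: C1_def C2_def D_def E_def lorentz_density_add_split_le\<close>)
  also have "\<dots> = C1 * (\<integral>\<^sup>+t. D f ((1 - e) * t) + D g ((1 - e) * t) \<partial>multiplicative_haar)
      + C2 * (\<integral>\<^sup>+t. E (e * t) \<partial>multiplicative_haar)"
    by (simp add: nn_integral_add nn_integral_cmult)
  also have "\<dots> = C1 * ((\<integral>\<^sup>+t. D f t \<partial>multiplicative_haar) + (\<integral>\<^sup>+t. D g t \<partial>multiplicative_haar))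
      + C2 * (\<integral>\<^sup>+t. E t \<partial>multiplicative_haar)"
    using assms nn_integral_multiplicative_haar_dilation [of "\<lambda>s. D f s + D g s" "1 - e"]
      nn_integral_multiplicative_haar_dilation [of E e]
    by (simp add: nn_integral_add)
  finally show ?thesis
    by (simp add: C1_def C2_def D_def E_def nn_integral_add mult.commute)
qed

lemma lorentz_pow_add_le:
  assumes [measurable]: "f \<in> borel_measurable M" "g \<in> borel_measurable M"
    and "0 < p" "0 < p1" "0 < q" "0 < e" "e < 1" "0 < u"
  shows "lorentz_pow M p q (\<lambda>x. f x + g x)
    \<le> ennreal ((1 + e) powr (q / p) * (1 - e) powr - q) * (lorentz_pow M p q f + lorentz_pow M p q g)
      + ennreal ((1 + 1 / e) powr (q / p) * e powr - q)
        * (lorentz_pow_below M p q f u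
           + ennreal q * (\<integral>\<^sup>+t \<in> {u..}. ennreal (t powr ((p - p1) * (q / p))) \<partial>multiplicative_haar)
             * epowr (\<integral>\<^sup>+x. ennreal (\<bar>g x\<bar> powr p1) \<partial>M) (q / p))"
proof -
  define C1 where "C1 = ennreal ((1 + e) powr (q / p) * (1 - e) powr - q)"
  define C2 where "C2 = ennreal ((1 + 1 / e) powr (q / p) * e powr - q)"
  define J where "J = (\<integral>\<^sup>+t \<in> {u..}. ennreal (t powr ((p - p1) * (q / p))) \<partial>multiplicative_haar)"
  define I where "I = epowr (\<integral>\<^sup>+x. ennreal (\<bar>g x\<bar> powr p1) \<partial>M) (q / p)"
  define \<Lambda> where "\<Lambda> h = (\<integral>\<^sup>+t. lorentz_density M p q h t \<partial>multiplicative_haar)" for h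
  define T where "T = (\<integral>\<^sup>+t \<in> {..<u}. lorentz_density M p q f t \<partial>multiplicative_haar)"
  have "\<Lambda> (\<lambda>x. f x + g x) \<le> C1 * (\<Lambda> f + \<Lambda> g)
      + C2 * (T + (\<integral>\<^sup>+t \<in> {u..}. lorentz_density M p q g t \<partial>multiplicative_haar))"
    using nn_integral_lorentz_density_add_le [of f M g p q e u] assms
    by (simp add: C1_def C2_def \<Lambda>_def T_def)
  also have "\<dots> \<le> C1 * (\<Lambda> f + \<Lambda> g) + C2 * (T + J * I)"
    using nn_integral_lorentz_density_tail_le_moment [of g M p q p1 u] assms
    by (intro add_left_mono mult_left_mono) (simp_all add: J_def I_def)
  finally have "ennreal q * \<Lambda> (\<lambda>x. f x + g x) \<le> ennreal q * (C1 * (\<Lambda> f + \<Lambda> g) + C2 * (T + J * I))"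
    by (rule mult_left_mono) simp
  moreover have "lorentz_pow M p q h = ennreal q * \<Lambda> h" if "h \<in> {f, g, \<lambda>x. f x + g x}" for h
    using that unfolding \<Lambda>_def by (auto intro: lorentz_pow_eq_nn_integral_multiplicative_haar)
  ultimately show ?thesis
    unfolding C1_def [symmetric] C2_def [symmetric] J_def [symmetric] I_def [symmetric]
      lorentz_pow_below_def T_def [symmetric]
    by (simp add: distrib_left mult_ac)
qed

lemma limsup_add_LIMSEQ_le:
  fixes a b :: "nat \<Rightarrow> ennreal"
  assumes "b \<longlonglongrightarrow> c"
  shows "limsup (\<lambda>n. a n + b n) \<le> limsup a + c"
proof (rule ennreal_le_epsilon)
  fix e :: real
  assume "limsup a + c < top" "0 < e"
  then have "c < c + ennreal e"
    by (simp add: less_top)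
  with assms have "eventually (\<lambda>n. b n < c + ennreal e) sequentially"
    by (rule order_tendstoD(2))
  then have "limsup (\<lambda>n. a n + b n) \<le> limsup (\<lambda>n. (c + ennreal e) + a n)"
    by (intro Limsup_mono) (auto elim!: eventually_mono simp: add.commute intro: add_left_mono)
  also have "\<dots> = (c + ennreal e) + limsup a"
    by (rule Limsup_const_add) simp
  finally show "limsup (\<lambda>n. a n + b n) \<le> limsup a + c + ennreal e"
    by (simp add: ac_simps)
qed

lemma limsup_lorentz_pow_add_le:
  fixes g :: "nat \<Rightarrow> 'a \<Rightarrow> real"
  assumes [measurable]: "f \<in> borel_measurable M" "\<And>j. g j \<in> borel_measurable M"
    and "0 < p" "p < p1" "0 < q" "0 < e" "e < 1" "0 < u"
    and "limsup (\<lambda>j. lorentz_norm M p q (g j)) \<le> A"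
    and "(\<lambda>j. \<integral>\<^sup>+x. ennreal (\<bar>g j x\<bar> powr p1) \<partial>M) \<longlonglongrightarrow> 0"
  shows "limsup (\<lambda>j. lorentz_pow M p q (\<lambda>x. f x + g j x))
    \<le> ennreal ((1 + e) powr (q / p) * (1 - e) powr - q) * (lorentz_pow M p q f + epowr A q)
      + ennreal ((1 + 1 / e) powr (q / p) * e powr - q) * lorentz_pow_below M p q f u"
proof -
  define C1 where "C1 = ennreal ((1 + e) powr (q / p) * (1 - e) powr - q)"
  define C2 where "C2 = ennreal ((1 + 1 / e) powr (q / p) * e powr - q)"
  define J where "J = (\<integral>\<^sup>+t \<in> {u..}. ennreal (t powr ((p - p1) * (q / p))) \<partial>multiplicative_haar)"
  define \<Phi> where "\<Phi> y = C1 * (lorentz_pow M p q f + epowr y q) + C2 * lorentz_pow_below M p q f u" for y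
  define R where "R j = C2 * (ennreal q * J * epowr (\<integral>\<^sup>+x. ennreal (\<bar>g j x\<bar> powr p1) \<partial>M) (q / p))" for j
  have "(p - p1) * (q / p) < 0"
    using assms by (intro mult_neg_pos) auto
  with assms have "J < top"
    unfolding J_def by (intro nn_integral_multiplicative_haar_tail_finite)
  then have "R \<longlonglongrightarrow> C2 * (ennreal q * J * epowr 0 (q / p))"
    unfolding R_def using assms
    by (intro ennreal_tendsto_cmult tendsto_epowr) (auto simp: C2_def ennreal_mult_less_top)
  then have "R \<longlonglongrightarrow> 0"
    by simp
  have "limsup (\<lambda>j. lorentz_pow M p q (\<lambda>x. f x + g j x))
      \<le> limsup (\<lambda>j. \<Phi> (lorentz_norm M p q (g j)) + R j)"
    using assms lorentz_pow_add_le [of f M "g _" p p1 q e u]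
    by (intro Limsup_mono always_eventually allI)
       (simp add: \<Phi>_def R_def C1_def C2_def J_def distrib_left lorentz_pow_eq_epowr_lorentz_norm [symmetric] ac_simps)
  also have "\<dots> \<le> limsup (\<lambda>j. \<Phi> (lorentz_norm M p q (g j))) + 0"
    using \<open>R \<longlonglongrightarrow> 0\<close> by (rule limsup_add_LIMSEQ_le)
  also have "limsup (\<lambda>j. \<Phi> (lorentz_norm M p q (g j))) = \<Phi> (limsup (\<lambda>j. lorentz_norm M p q (g j)))"
    unfolding \<Phi>_def using assms
    by (intro Limsup_compose_continuous_mono monoI add_mono mult_left_mono epowr_mono order_refl
          continuous_on_add continuous_on_const ennreal_continuous_on_cmult continuous_on_epowr)
       (auto simp: C1_def)
  also have "\<dots> \<le> \<Phi> A"
    unfolding \<Phi>_def using assms by (intro add_mono mult_left_mono epowr_mono order_refl) auto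
  finally show ?thesis
    by (simp add: \<Phi>_def C1_def C2_def)
qed

lemma limsup_lorentz_pow_add_le_factor:
  fixes g :: "nat \<Rightarrow> 'a \<Rightarrow> real"
  assumes [measurable]: "f \<in> borel_measurable M" "\<And>j. g j \<in> borel_measurable M"
    and "0 < p" "p < p1" "0 < q" "0 < e" "e < 1"
    and "lorentz_pow M p q f < top"
    and "limsup (\<lambda>j. lorentz_norm M p q (g j)) \<le> A"
    and "(\<lambda>j. \<integral>\<^sup>+x. ennreal (\<bar>g j x\<bar> powr p1) \<partial>M) \<longlonglongrightarrow> 0"
  shows "limsup (\<lambda>j. lorentz_pow M p q (\<lambda>x. f x + g j x))
    \<le> ennreal ((1 + e) powr (q / p) * (1 - e) powr - q) * (lorentz_pow M p q f + epowr A q)"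
    (is "_ \<le> ?B")
proof (rule LIMSEQ_le_const)
  let ?C2 = "ennreal ((1 + 1 / e) powr (q / p) * e powr - q)"
  have "(\<lambda>n. ?B + ?C2 * lorentz_pow_below M p q f (1 / Suc n)) \<longlonglongrightarrow> ?B + ?C2 * 0"
    using assms by (intro tendsto_add tendsto_const ennreal_tendsto_cmult lorentz_pow_below_tendsto_0) auto
  then show "(\<lambda>n. ?B + ?C2 * lorentz_pow_below M p q f (1 / Suc n)) \<longlonglongrightarrow> ?B"
    by simp
  show "\<exists>N. \<forall>n\<ge>N. limsup (\<lambda>j. lorentz_pow M p q (\<lambda>x. f x + g j x))
      \<le> ?B + ?C2 * lorentz_pow_below M p q f (1 / Suc n)"
    using assms by (intro exI allI impI limsup_lorentz_pow_add_le) auto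
qed

theorem lemma5p4:
  fixes M :: "'a measure" and p p1 q :: real and A :: ennreal
    and f :: "'a \<Rightarrow> real" and g :: "nat \<Rightarrow> 'a \<Rightarrow> real"
  assumes "0 < p" "p < p1" "0 < q"
    and "in_Lorentz M p q f"
    and "\<And>j. in_Lorentz M p q (g j)"
    and "limsup (\<lambda>j. lorentz_norm M p q (g j)) \<le> A"
    and "(\<lambda>j. lp_norm M p1 (g j)) \<longlonglongrightarrow> 0"
  shows "limsup (\<lambda>j. lorentz_pow M p q (\<lambda>x. f x + g j x)) \<le> lorentz_pow M p q f + epowr A q"
proof (cases "A = top")
  case False
  have [measurable]: "f \<in> borel_measurable M" "\<And>j. g j \<in> borel_measurable M"
    and f_fin: "lorentz_pow M p q f < top"
    using assms(4,5) by (auto simp: in_Lorentz_def)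
  have moments: "(\<lambda>j. \<integral>\<^sup>+x. ennreal (\<bar>g j x\<bar> powr p1) \<partial>M) \<longlonglongrightarrow> 0"
    using tendsto_epowr [OF assms(7), of p1] assms(1,2)
    by (simp add: nn_integral_powr_eq_epowr_lp_norm)
  define B where "B = lorentz_pow M p q f + epowr A q"
  define C where "C e = (1 + e) powr (q / p) * (1 - e) powr - q" for e :: real
  have "B < top"
    using False f_fin by (cases A) (auto simp: B_def)
  have "limsup (\<lambda>j. lorentz_pow M p q (\<lambda>x. f x + g j x)) \<le> ennreal (C e) * B" if "0 < e" "e < 1" for e
    using limsup_lorentz_pow_add_le_factor [OF _ _ assms(1-3) that f_fin assms(6) moments]
    by (simp add: B_def C_def)
  moreover have "((\<lambda>e. ennreal (C e) * B) \<longlongrightarrow> ennreal (C 0) * B) (at_right 0)"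
    unfolding C_def using \<open>B < top\<close>
    by (subst (1 2) mult.commute) (intro ennreal_tendsto_cmult tendsto_ennrealI tendsto_intros; simp)
  moreover have "eventually (\<lambda>e. 0 < e \<and> e < (1::real)) (at_right 0)"
    by (auto simp: eventually_at_right_field intro!: exI [of _ 1])
  ultimately have "limsup (\<lambda>j. lorentz_pow M p q (\<lambda>x. f x + g j x)) \<le> ennreal (C 0) * B"
    by (intro tendsto_lowerbound [where F = "at_right 0"]) (auto elim!: eventually_mono)
  then show ?thesis
    by (simp add: B_def C_def)
qed simp

end
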